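(* Let $G=\langle b\rangle\wr\langle a\rangle$ be the restricted wreath product with $\langle a\rangle\cong\langle b\rangle\cong\mathbb Z$. Then the bijection $$f\colon\{\,a^n\mid n\in\mathbb N\,\}\to\mathbb N,\quad a^n\mapsto n$$ is an interpretation of $(\mathbb N,+,\times)$ in the group $(G,\cdot)$ with parameters.
   Context: The restricted wreath product $\langle b\rangle\wr\langle a\rangle$ means: the elements $a^{-k}ba^k$, $k\in\mathbb Z$, generate a free abelian group $H$ with basis $(a^{-k}ba^k)_{k\in\mathbb Z}$, and the group generated by $a,b$ is $H\rtimes\langle a\rangle$. An interpretation with parameters of $M$ in $N$ is a pair $(n,f)$, $f$ a surjection from a subset of $N^n$ onto $M$, such that the preimage under $f$ (applied coordinatewise) of every set definable without parameters in $M$ is first-order definable in $N$ with parameters from $N$. *)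

theory Defs
  imports Main
begin

text \<open>Elements are pairs (h, k): h a finitely supported function Z -> Z (the base
group H, free abelian on the conjugates of b) and k the exponent of a.\<close>

definition wr_carrier :: "((int \<Rightarrow> int) \<times> int) set" where
  "wr_carrier = {(h, k). finite {i. h i \<noteq> 0}}"

definition wr_mult :: "(int \<Rightarrow> int) \<times> int \<Rightarrow> (int \<Rightarrow> int) \<times> int \<Rightarrow> (int \<Rightarrow> int) \<times> int" where
  "wr_mult x y = ((\<lambda>i. fst x i + fst y (i - snd x)), snd x + snd y)"

definition wr_one :: "(int \<Rightarrow> int) \<times> int" where
  "wr_one = ((\<lambda>i. 0), 0)"

definition wr_a :: "(int \<Rightarrow> int) \<times> int" where
  "wr_a = ((\<lambda>i. 0), 1)"

definition wr_b :: "(int \<Rightarrow> int) \<times> int" where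
  "wr_b = ((\<lambda>i. if i = 0 then 1 else 0), 0)"

definition wr_pow :: "(int \<Rightarrow> int) \<times> int \<Rightarrow> nat \<Rightarrow> (int \<Rightarrow> int) \<times> int" where
  "wr_pow x n = (wr_mult x ^^ n) wr_one"

datatype gterm = GVar nat | GMul gterm gterm
datatype gform = GEq gterm gterm | GNot gform | GAnd gform gform | GEx nat gform

fun gval :: "('g \<Rightarrow> 'g \<Rightarrow> 'g) \<Rightarrow> (nat \<Rightarrow> 'g) \<Rightarrow> gterm \<Rightarrow> 'g" where
  "gval m e (GVar v) = e v"
| "gval m e (GMul s t) = m (gval m e s) (gval m e t)"

fun gsat :: "'g set \<Rightarrow> ('g \<Rightarrow> 'g \<Rightarrow> 'g) \<Rightarrow> (nat \<Rightarrow> 'g) \<Rightarrow> gform \<Rightarrow> bool" where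
  "gsat C m e (GEq s t) = (gval m e s = gval m e t)"
| "gsat C m e (GNot \<phi>) = (\<not> gsat C m e \<phi>)"
| "gsat C m e (GAnd \<phi> \<psi>) = (gsat C m e \<phi> \<and> gsat C m e \<psi>)"
| "gsat C m e (GEx v \<phi>) = (\<exists>x\<in>C. gsat C m (e(v := x)) \<phi>)"

fun gtvars :: "gterm \<Rightarrow> nat set" where
  "gtvars (GVar v) = {v}"
| "gtvars (GMul s t) = gtvars s \<union> gtvars t"

fun gfv :: "gform \<Rightarrow> nat set" where
  "gfv (GEq s t) = gtvars s \<union> gtvars t"
| "gfv (GNot \<phi>) = gfv \<phi>"
| "gfv (GAnd \<phi> \<psi>) = gfv \<phi> \<union> gfv \<psi>"
| "gfv (GEx v \<phi>) = gfv \<phi> - {v}"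

definition group_definable_params :: "'g set \<Rightarrow> ('g \<Rightarrow> 'g \<Rightarrow> 'g) \<Rightarrow> nat \<Rightarrow> 'g list set \<Rightarrow> bool" where
  "group_definable_params C m k X \<longleftrightarrow>
     (\<exists>\<phi> ps. set ps \<subseteq> C \<and> gfv \<phi> \<subseteq> {..<k + length ps} \<and>
        X = {xs. length xs = k \<and> set xs \<subseteq> C \<and> gsat C m (\<lambda>i. (xs @ ps) ! i) \<phi>})"

datatype aterm = AVar nat | APlus aterm aterm | ATimes aterm aterm
datatype aform = AEq aterm aterm | ANot aform | AAnd aform aform | AEx nat aform

fun aval :: "(nat \<Rightarrow> nat) \<Rightarrow> aterm \<Rightarrow> nat" where
  "aval e (AVar v) = e v"
| "aval e (APlus s t) = aval e s + aval e t"
| "aval e (ATimes s t) = aval e s * aval e t"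

fun asat :: "(nat \<Rightarrow> nat) \<Rightarrow> aform \<Rightarrow> bool" where
  "asat e (AEq s t) = (aval e s = aval e t)"
| "asat e (ANot \<phi>) = (\<not> asat e \<phi>)"
| "asat e (AAnd \<phi> \<psi>) = (asat e \<phi> \<and> asat e \<psi>)"
| "asat e (AEx v \<phi>) = (\<exists>x. asat (e(v := x)) \<phi>)"

fun atvars :: "aterm \<Rightarrow> nat set" where
  "atvars (AVar v) = {v}"
| "atvars (APlus s t) = atvars s \<union> atvars t"
| "atvars (ATimes s t) = atvars s \<union> atvars t"

fun afv :: "aform \<Rightarrow> nat set" where
  "afv (AEq s t) = atvars s \<union> atvars t"
| "afv (ANot \<phi>) = afv \<phi>"
| "afv (AAnd \<phi> \<psi>) = afv \<phi> \<union> afv \<psi>"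
| "afv (AEx v \<phi>) = afv \<phi> - {v}"

definition arith_definable :: "nat \<Rightarrow> nat list set \<Rightarrow> bool" where
  "arith_definable k S \<longleftrightarrow>
     (\<exists>\<phi>. afv \<phi> \<subseteq> {..<k} \<and> S = {xs. length xs = k \<and> asat (\<lambda>i. xs ! i) \<phi>})"

definition interpretation_params_nat :: "'g set \<Rightarrow> ('g \<Rightarrow> 'g \<Rightarrow> 'g) \<Rightarrow> nat \<Rightarrow> 'g list set \<Rightarrow> ('g list \<Rightarrow> nat) \<Rightarrow> bool" where
  "interpretation_params_nat C m n D f \<longleftrightarrow>
     D \<subseteq> {xs. length xs = n \<and> set xs \<subseteq> C} \<and> f ` D = UNIV \<and>
     (\<forall>k S. arith_definable k S \<longrightarrow>
        group_definable_params C m (n * k)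
          {concat ds | ds. length ds = k \<and> set ds \<subseteq> D \<and> map f ds \<in> S})"

end

theory Submission
  imports Defs "HOL-Computational_Algebra.Primes"
begin

text \<open>
  Addition of exponents is multiplication in \<open>\<langle>a\<rangle>\<close>, which is the
  centralizer of \<open>a\<close>.  For multiplication, \<open>(h, k) \<in> G\<close> commutes with \<open>b a\<^sup>i\<close> only if \<open>k = i \<cdot> \<Sigma>h\<close>
  (compare first moments), and every such pair occurs; a few more commutation conditions then
  give an existential formula in \<open>a, b\<close> defining \<open>{(a\<^sup>i, a\<^sup>j, a\<^bsup>i j\<^esup>)}\<close>.  Finally
  \<open>\<nat> \<subseteq> \<int>\<close> is the set of sums of four squares, which makes \<open>{a\<^sup>n | n \<in> \<nat>}\<close> definable, so quantifiers over \<open>\<nat>\<close> can be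
  relativised.
\<close>

section \<open>Lagrange's four-square theorem\<close>

definition sum_four_squares :: "int \<Rightarrow> bool" where
  "sum_four_squares n \<longleftrightarrow> (\<exists>a b c d. n = a^2 + b^2 + c^2 + d^2)"

lemma euler_four_square_identity:
  fixes a b c d w x y z :: "'a :: comm_ring_1"
  shows "(a^2+b^2+c^2+d^2)*(w^2+x^2+y^2+z^2) =
    (a*w+b*x+c*y+d*z)^2 + (a*x-b*w+c*z-d*y)^2 + (a*y-b*z-c*w+d*x)^2 + (a*z+b*y-c*x-d*w)^2"
  by (simp add: power2_eq_square algebra_simps)

lemma sum_four_squares_mult:
  "sum_four_squares m \<Longrightarrow> sum_four_squares n \<Longrightarrow> sum_four_squares (m * n)"
  unfolding sum_four_squares_def by (metis euler_four_square_identity)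

lemma centered_representative:
  fixes x m :: int
  assumes "m > 0"
  shows "\<exists>k. - m < 2 * (x + m * k) \<and> 2 * (x + m * k) \<le> m"
proof -
  define k where "k = - ((2 * x + m - 1) div (2 * m))"
  have "2 * (x + m * k) + m = (2 * x + m - 1) mod (2 * m) + 1"
    unfolding k_def using div_mult_mod_eq[of "2 * x + m - 1" "2 * m"] by (simp add: algebra_simps)
  moreover have "0 \<le> (2 * x + m - 1) mod (2 * m)" "(2 * x + m - 1) mod (2 * m) < 2 * m"
    using assms by auto
  ultimately show ?thesis by (intro exI[of _ k]) linarith
qed

lemma centered_square_bound:
  fixes y m :: int
  assumes "- m < 2 * y" "2 * y \<le> m"
  shows "4 * y^2 \<le> m^2" and "4 * y^2 = m^2 \<Longrightarrow> 2 * y = m"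
proof -
  have "\<bar>2 * y\<bar> \<le> m" using assms by linarith
  hence "(2 * y)^2 \<le> m^2" using assms by (subst power2_le_iff_abs_le) auto
  thus "4 * y^2 \<le> m^2" by (simp add: power_mult_distrib)
  assume "4 * y^2 = m^2"
  hence "(2 * y)^2 = m^2" by (simp add: power_mult_distrib)
  hence "2 * y = m \<or> 2 * y = - m" using power2_eq_iff by blast
  thus "2 * y = m" using assms by auto
qed

lemma prime_no_proper_divisor:
  fixes p m :: int
  assumes "prime p" "1 < m" "m < p"
  shows "\<not> m dvd p"
  using assms unfolding prime_int_iff by (metis less_le_not_le order.strict_trans zero_less_one)

text \<open>The heart of the descent: if \<open>m p = \<Sigma> x\<^sub>i\<^sup>2\<close> and \<open>y\<^sub>i = x\<^sub>i + m k\<^sub>i\<close> satisfy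
  \<open>\<Sigma> y\<^sub>i\<^sup>2 = m r\<close>, then Euler's identity for \<open>(m p)(m r)\<close> has all four terms divisible by \<open>m\<close>, so \<open>r p\<close> is a sum
  of four squares.\<close>

lemma descent_product:
  fixes m p r x1 x2 x3 x4 k1 k2 k3 k4 :: int
  assumes "m \<noteq> 0" and mp: "m * p = x1^2 + x2^2 + x3^2 + x4^2"
    and mr: "(x1 + m*k1)^2 + (x2 + m*k2)^2 + (x3 + m*k3)^2 + (x4 + m*k4)^2 = m * r"
  shows "sum_four_squares (r * p)"
proof -
  define q1 where "q1 = p + x1*k1 + x2*k2 + x3*k3 + x4*k4"
  define q2 where "q2 = x1*k2 - x2*k1 + x3*k4 - x4*k3"
  define q3 where "q3 = x1*k3 - x2*k4 - x3*k1 + x4*k2"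
  define q4 where "q4 = x1*k4 + x2*k3 - x3*k2 - x4*k1"
  have "(m * p) * (m * r) = (m * q1)^2 + (m * q2)^2 + (m * q3)^2 + (m * q4)^2"
    unfolding mp mr[symmetric] euler_four_square_identity q1_def q2_def q3_def q4_def
    using mp by algebra
  hence "(m * m) * (r * p) = (m * m) * (q1^2 + q2^2 + q3^2 + q4^2)" by algebra
  hence "r * p = q1^2 + q2^2 + q3^2 + q4^2" using assms(1) by simp
  thus ?thesis unfolding sum_four_squares_def by blast
qed

text \<open>The two degenerate cases of the descent, \<open>\<Sigma> y\<^sub>i\<^sup>2 = 0\<close> and \<open>2 y\<^sub>i = m\<close> for all \<open>i\<close>,
  force \<open>m\<close> to divide \<open>p\<close>.\<close>

lemma descent_zero_case:
  fixes m p x1 x2 x3 x4 k1 k2 k3 k4 :: int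
  assumes "m \<noteq> 0" and mp: "m * p = x1^2 + x2^2 + x3^2 + x4^2"
    and zero: "(x1 + m*k1)^2 + (x2 + m*k2)^2 + (x3 + m*k3)^2 + (x4 + m*k4)^2 = 0"
  shows "m dvd p"
proof -
  have "(x1 + m*k1)^2 = 0 \<and> (x2 + m*k2)^2 = 0 \<and> (x3 + m*k3)^2 = 0 \<and> (x4 + m*k4)^2 = 0"
    using zero zero_le_power2[of "x1 + m*k1"] zero_le_power2[of "x2 + m*k2"]
      zero_le_power2[of "x3 + m*k3"] zero_le_power2[of "x4 + m*k4"] by linarith
  hence "x1 = - (m*k1) \<and> x2 = - (m*k2) \<and> x3 = - (m*k3) \<and> x4 = - (m*k4)" by simp
  hence "m * p = m * (m * (k1^2 + k2^2 + k3^2 + k4^2))"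
    unfolding mp by (simp add: power2_eq_square algebra_simps)
  hence "p = m * (k1^2 + k2^2 + k3^2 + k4^2)" using assms(1) by simp
  thus ?thesis by simp
qed

lemma descent_half_case:
  fixes m p x1 x2 x3 x4 k1 k2 k3 k4 :: int
  assumes "m \<noteq> 0" and mp: "m * p = x1^2 + x2^2 + x3^2 + x4^2"
    and half: "2*(x1 + m*k1) = m" "2*(x2 + m*k2) = m" "2*(x3 + m*k3) = m" "2*(x4 + m*k4) = m"
  shows "m dvd p"
proof -
  have x: "2*x1 = m*(1-2*k1)" "2*x2 = m*(1-2*k2)" "2*x3 = m*(1-2*k3)" "2*x4 = m*(1-2*k4)"
    using half by (simp_all add: algebra_simps)
  have "4 * (m * p) = (2*x1)^2 + (2*x2)^2 + (2*x3)^2 + (2*x4)^2"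
    using mp by (simp add: power_mult_distrib)
  also have "\<dots> = 4 * (m * (m * (1 + (k1^2-k1) + (k2^2-k2) + (k3^2-k3) + (k4^2-k4))))"
    unfolding x by algebra
  finally have "p = m * (1 + (k1^2-k1) + (k2^2-k2) + (k3^2-k3) + (k4^2-k4))" using assms(1) by simp
  thus ?thesis by simp
qed

lemma four_square_descent:
  fixes p m x1 x2 x3 x4 :: int
  assumes p: "prime p" and m: "1 < m" "m < p" and mp: "m * p = x1^2 + x2^2 + x3^2 + x4^2"
  shows "\<exists>r. 0 < r \<and> r < m \<and> sum_four_squares (r * p)"
proof -
  have m0: "m > 0" using m by simp
  obtain k1 k2 k3 k4 where k:
    "- m < 2*(x1 + m*k1)" "2*(x1 + m*k1) \<le> m" "- m < 2*(x2 + m*k2)" "2*(x2 + m*k2) \<le> m"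
    "- m < 2*(x3 + m*k3)" "2*(x3 + m*k3) \<le> m" "- m < 2*(x4 + m*k4)" "2*(x4 + m*k4) \<le> m"
    using centered_representative[OF m0] by meson
  define y1 y2 y3 y4 where "y1 = x1 + m*k1" "y2 = x2 + m*k2" "y3 = x3 + m*k3" "y4 = x4 + m*k4"
  define r where "r = p + (2*x1*k1 + m*k1^2) + (2*x2*k2 + m*k2^2) + (2*x3*k3 + m*k3^2)
    + (2*x4*k4 + m*k4^2)"
  have yr: "y1^2 + y2^2 + y3^2 + y4^2 = m * r"
    unfolding y1_y2_y3_y4_def r_def using mp by algebra
  note bound = centered_square_bound[OF k(1,2)] centered_square_bound[OF k(3,4)]
    centered_square_bound[OF k(5,6)] centered_square_bound[OF k(7,8)]
  have "m * r \<le> m * m"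
    using bound(1,3,5,7) yr unfolding y1_y2_y3_y4_def by (simp add: power2_eq_square)
  hence "r \<le> m" using m0 by simp
  moreover have "0 \<le> m * r" unfolding yr[symmetric] by simp
  hence "0 \<le> r" using m0 by (simp add: zero_le_mult_iff)
  moreover have "r \<noteq> 0"
  proof
    assume "r = 0"
    hence "m dvd p" using descent_zero_case[of m p] m0 mp yr unfolding y1_y2_y3_y4_def by simp
    thus False using prime_no_proper_divisor p m by blast
  qed
  moreover have "r \<noteq> m"
  proof
    assume "r = m"
    hence "4*y1^2 = m^2 \<and> 4*y2^2 = m^2 \<and> 4*y3^2 = m^2 \<and> 4*y4^2 = m^2"
      using bound(1,3,5,7) yr unfolding y1_y2_y3_y4_def by (auto simp: power2_eq_square)
    hence "m dvd p"
      using descent_half_case[of m p] bound(2,4,6,8) m0 mp unfolding y1_y2_y3_y4_def by simp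
    thus False using prime_no_proper_divisor p m by blast
  qed
  moreover have "sum_four_squares (r * p)"
    using descent_product[of m p] m0 mp yr unfolding y1_y2_y3_y4_def by simp
  ultimately show ?thesis by (intro exI[of _ r]) auto
qed

lemma dvd_small_eq_0:
  fixes p z :: int
  assumes "p dvd z" "\<bar>z\<bar> < p"
  shows "z = 0"
  using assms dvd_imp_le_int by force

text \<open>For an odd prime \<open>p = 2h + 1\<close> the \<open>h + 1\<close> values \<open>x\<^sup>2\<close>, \<open>0 \<le> x \<le> h\<close>, are distinct mod \<open>p\<close>,
  as are the values \<open>-1 - y\<^sup>2\<close>; by pigeonhole the two families meet.\<close>

lemma squares_mod_prime_inj:
  fixes p h x x' :: int
  assumes "prime p" "p = 2 * h + 1" "x \<in> {0..h}" "x' \<in> {0..h}" "p dvd x^2 - x'^2"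
  shows "x = x'"
proof -
  have "x^2 - x'^2 = (x - x') * (x + x')" by (simp add: power2_eq_square algebra_simps)
  hence "p dvd x - x' \<or> p dvd x + x'" using assms(1,5) prime_dvd_mult_iff by metis
  moreover have "\<bar>x - x'\<bar> < p" "\<bar>x + x'\<bar> < p" using assms(2-4) by auto
  ultimately have "x - x' = 0 \<or> x + x' = 0" using dvd_small_eq_0 by blast
  thus ?thesis using assms(3,4) by auto
qed

lemma prime_dvd_sum_two_squares_plus_one:
  fixes p h :: int
  assumes "prime p" "p = 2 * h + 1"
  shows "\<exists>x y. x \<in> {0..h} \<and> y \<in> {0..h} \<and> p dvd x^2 + y^2 + 1"
proof -
  have p1: "p > 1" using assms(1) prime_gt_1_int by blast
  define X where "X = (\<lambda>x. x^2 mod p) ` {0..h}"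
  define Y where "Y = (\<lambda>y. (-1 - y^2) mod p) ` {0..h}"
  have "inj_on (\<lambda>x. x^2 mod p) {0..h}"
    by (rule inj_onI) (use squares_mod_prime_inj[OF assms] mod_eq_dvd_iff in blast)
  hence cX: "card X = nat (h + 1)" unfolding X_def by (simp add: card_image)
  have "inj_on (\<lambda>y. (-1 - y^2) mod p) {0..h}"
  proof (rule inj_onI)
    fix y y' assume "y \<in> {0..h}" "y' \<in> {0..h}" "(-1 - y^2) mod p = (-1 - y'^2) mod p"
    moreover from this(3) have "p dvd y'^2 - y^2" by (simp add: mod_eq_dvd_iff)
    ultimately show "y = y'" using squares_mod_prime_inj[OF assms] by (metis dvd_diff_commute)
  qed
  hence cY: "card Y = nat (h + 1)" unfolding Y_def by (simp add: card_image)
  have "X \<inter> Y \<noteq> {}"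
  proof
    assume "X \<inter> Y = {}"
    hence "card (X \<union> Y) = nat (p + 1)"
      using cX cY assms(2) p1 by (simp add: card_Un_disjoint X_def Y_def)
    moreover have "X \<union> Y \<subseteq> {0..<p}" unfolding X_def Y_def using p1 by auto
    ultimately have "nat (p + 1) \<le> card {0..<p}" by (metis card_mono finite_atLeastLessThan_int)
    thus False using p1 by simp
  qed
  then obtain x y where "x \<in> {0..h}" "y \<in> {0..h}" "x^2 mod p = (-1 - y^2) mod p"
    unfolding X_def Y_def by fastforce
  moreover from this(3) have "p dvd x^2 + y^2 + 1" by (simp add: mod_eq_dvd_iff algebra_simps)
  ultimately show ?thesis by blast
qed

lemma odd_prime_small_multiple:
  fixes p :: int
  assumes "prime p" "odd p"
  shows "\<exists>m. 0 < m \<and> m < p \<and> sum_four_squares (m * p)"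
proof -
  obtain h where h: "p = 2 * h + 1" using assms(2) by (meson oddE)
  have p3: "p \<ge> 3" using prime_ge_2_int[OF assms(1)] assms(2) by presburger
  obtain x y where xy: "x \<in> {0..h}" "y \<in> {0..h}" "p dvd x^2 + y^2 + 1"
    using prime_dvd_sum_two_squares_plus_one[OF assms(1) h] by blast
  then obtain m where m: "x^2 + y^2 + 1 = p * m" by (elim dvdE)
  have "(2*x)^2 \<le> (p - 1)^2" "(2*y)^2 \<le> (p - 1)^2" using xy h by (auto intro!: power_mono)
  hence "4*x^2 \<le> p^2 - 2*p + 1" "4*y^2 \<le> p^2 - 2*p + 1"
    by (simp_all add: power2_eq_square algebra_simps)
  moreover have "3 * p \<le> p^2" using p3 by (simp add: power2_eq_square)
  ultimately have "4*x^2 + 4*y^2 + 4 < 4 * p^2" using p3 by linarith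
  hence "4 * (p * m) < 4 * (p * p)" unfolding m[symmetric] by (simp add: power2_eq_square)
  hence "p * m < p * p" by simp
  hence "m < p" using p3 by simp
  moreover have "0 < p * m" unfolding m[symmetric] by (simp add: add_nonneg_pos)
  hence "0 < m" using p3 by (simp add: zero_less_mult_iff)
  moreover have "m * p = x^2 + y^2 + 1^2 + 0^2" using m by simp
  ultimately show ?thesis unfolding sum_four_squares_def by blast
qed

lemma prime_sum_four_squares_of_multiple:
  fixes p m :: int
  assumes "prime p" "0 < m" "m < p" "sum_four_squares (m * p)"
  shows "sum_four_squares p"
  using assms(2-)
proof (induction "nat m" arbitrary: m rule: less_induct)
  case less
  show ?case
  proof (cases "m = 1")
    case True thus ?thesis using less.prems by simp
  next
    case False
    obtain x1 x2 x3 x4 where "m * p = x1^2 + x2^2 + x3^2 + x4^2"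
      using less.prems(3) unfolding sum_four_squares_def by blast
    moreover have "1 < m" using less.prems(1) False by simp
    ultimately obtain r where "0 < r" "r < m" "sum_four_squares (r * p)"
      using four_square_descent[OF assms(1) _ less.prems(2)] by blast
    thus ?thesis using less.hyps[of r] less.prems by simp
  qed
qed

lemma prime_sum_four_squares:
  fixes p :: nat
  assumes "prime p"
  shows "sum_four_squares (int p)"
proof (cases "p = 2")
  case True
  hence "int p = 1^2 + 1^2 + 0^2 + 0^2" by simp
  thus ?thesis unfolding sum_four_squares_def by blast
next
  case False
  hence "odd (int p)" using assms prime_odd_nat prime_ge_2_nat[OF assms] by simp
  moreover have "prime (int p)" using assms by simp
  ultimately show ?thesis
    using odd_prime_small_multiple prime_sum_four_squares_of_multiple by blast
qed

text \<open>Lagrange's four-square theorem: the sums of four squares are exactly the nonnegative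
  integers.  It is what makes the natural numbers definable inside the integers.\<close>

theorem sum_four_squares_iff_nonneg: "sum_four_squares k \<longleftrightarrow> 0 \<le> k"
proof
  show "0 \<le> k" if "sum_four_squares k" using that unfolding sum_four_squares_def by auto
next
  have "sum_four_squares (int n)" for n
  proof (induction n rule: prime_divisors_induct)
    case zero thus ?case unfolding sum_four_squares_def by (intro exI[of _ 0]) simp
  next
    case (unit n)
    hence "int n = 1^2 + 0^2 + 0^2 + 0^2" by simp
    thus ?case unfolding sum_four_squares_def by blast
  next
    case (factor p n) thus ?case using sum_four_squares_mult prime_sum_four_squares by simp
  qed
  thus "sum_four_squares k" if "0 \<le> k" using that by (metis nonneg_int_cases)
qed


section \<open>Finitely supported integer sequences\<close>

text \<open>Two invariants drive the
  analysis of centralizers: the sum \<open>\<Sigma>h\<close> and the first moment \<open>\<Sigma> n \<cdot> h n\<close>.\<close>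

abbreviation fin_supp :: "(int \<Rightarrow> int) \<Rightarrow> bool" where
  "fin_supp f \<equiv> finite {n. f n \<noteq> 0}"

definition seq_sum :: "(int \<Rightarrow> int) \<Rightarrow> int" where
  "seq_sum f = sum f {n. f n \<noteq> 0}"

definition seq_moment :: "(int \<Rightarrow> int) \<Rightarrow> int" where
  "seq_moment f = seq_sum (\<lambda>n. n * f n)"

definition unit_at :: "int \<Rightarrow> int \<Rightarrow> int" where
  "unit_at c n = (if n = c then 1 else 0)"

lemma seq_sum_eq_sum: "finite A \<Longrightarrow> {n. f n \<noteq> 0} \<subseteq> A \<Longrightarrow> seq_sum f = sum f A"
  unfolding seq_sum_def by (rule sum.mono_neutral_left) auto

lemma fin_supp_add: "fin_supp f \<Longrightarrow> fin_supp g \<Longrightarrow> fin_supp (\<lambda>n. f n + g n)"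
  by (rule finite_subset[of _ "{n. f n \<noteq> 0} \<union> {n. g n \<noteq> 0}"]) auto

lemma fin_supp_mult: "fin_supp f \<Longrightarrow> fin_supp (\<lambda>n. c n * f n)"
  by (rule finite_subset[of _ "{n. f n \<noteq> 0}"]) auto

lemma shift_support: "{n. f (n - i) \<noteq> 0} = (\<lambda>m. m + i) ` {n::int. f n \<noteq> (0::int)}"
proof (rule set_eqI)
  fix x
  show "x \<in> {n. f (n - i) \<noteq> 0} \<longleftrightarrow> x \<in> (\<lambda>m. m + i) ` {n. f n \<noteq> 0}"
    by (auto intro: image_eqI[where x="x - i"])
qed

lemma fin_supp_shift: "fin_supp f \<Longrightarrow> fin_supp (\<lambda>n. f (n - i))"
  unfolding shift_support by simp

lemma fin_supp_unit_at: "fin_supp (unit_at c)"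
  by (rule finite_subset[of _ "{c}"]) (auto simp: unit_at_def)

lemma seq_sum_add:
  assumes "fin_supp f" "fin_supp g"
  shows "seq_sum (\<lambda>n. f n + g n) = seq_sum f + seq_sum g"
proof -
  let ?A = "{n. f n \<noteq> 0} \<union> {n. g n \<noteq> 0}"
  have A: "finite ?A" using assms by simp
  have "seq_sum (\<lambda>n. f n + g n) = sum (\<lambda>n. f n + g n) ?A"
    by (rule seq_sum_eq_sum[OF A]) auto
  also have "\<dots> = sum f ?A + sum g ?A" by (rule sum.distrib)
  also have "sum f ?A = seq_sum f" by (rule seq_sum_eq_sum[OF A, symmetric]) auto
  also have "sum g ?A = seq_sum g" by (rule seq_sum_eq_sum[OF A, symmetric]) auto
  finally show ?thesis .
qed

lemma seq_sum_mult:
  assumes "fin_supp f"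
  shows "seq_sum (\<lambda>n. c * f n) = c * seq_sum f"
proof -
  have "seq_sum (\<lambda>n. c * f n) = sum (\<lambda>n. c * f n) {n. f n \<noteq> 0}"
    by (rule seq_sum_eq_sum) (use assms in auto)
  thus ?thesis by (simp add: seq_sum_def sum_distrib_left)
qed

lemma seq_sum_shift: "seq_sum (\<lambda>n. f (n - i)) = seq_sum f"
  unfolding seq_sum_def shift_support by (subst sum.reindex) (auto simp: inj_on_def)

lemma seq_sum_unit_at: "seq_sum (unit_at c) = 1"
  by (subst seq_sum_eq_sum[of "{c}"]) (auto simp: unit_at_def)

lemma seq_moment_add:
  "fin_supp f \<Longrightarrow> fin_supp g \<Longrightarrow> seq_moment (\<lambda>n. f n + g n) = seq_moment f + seq_moment g"
  unfolding seq_moment_def by (simp add: distrib_left seq_sum_add fin_supp_mult)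

lemma seq_moment_shift:
  assumes "fin_supp f"
  shows "seq_moment (\<lambda>n. f (n - i)) = seq_moment f + i * seq_sum f"
proof -
  have "seq_moment (\<lambda>n. f (n - i)) = seq_sum (\<lambda>n. (\<lambda>m. m * f m + i * f m) (n - i))"
    unfolding seq_moment_def by (rule arg_cong[where f=seq_sum]) (auto simp: algebra_simps)
  also have "\<dots> = seq_sum (\<lambda>m. m * f m + i * f m)" by (rule seq_sum_shift)
  also have "\<dots> = seq_moment f + i * seq_sum f"
    using assms by (simp add: seq_moment_def seq_sum_add seq_sum_mult fin_supp_mult)
  finally show ?thesis .
qed

lemma seq_moment_unit_at: "seq_moment (unit_at c) = c"
  unfolding seq_moment_def by (subst seq_sum_eq_sum[of "{c}"]) (auto simp: unit_at_def)

lemma seq_sum_zero_telescopes: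
  assumes g: "fin_supp g" "seq_sum g = 0"
  shows "\<exists>h. fin_supp h \<and> (\<forall>n. h n = h (n - 1) + g n)"
proof -
  define N where "N = Max (abs ` {n. g n \<noteq> 0} \<union> {0})"
  have N: "n \<in> {-N..N}" if "g n \<noteq> 0" for n
  proof -
    have "\<bar>n\<bar> \<le> N" unfolding N_def using g(1) that by (intro Max_ge) auto
    thus ?thesis by auto
  qed
  define h where "h n = sum g {-N..n}" for n
  have step: "h n = h (n - 1) + g n" for n
  proof (cases "n < -N")
    case True thus ?thesis unfolding h_def using N[of n] by force
  next
    case False
    hence "{-N..n} = insert n {-N..n - 1}" by auto
    thus ?thesis unfolding h_def by simp
  qed
  have "h n = 0" if "n \<notin> {-N..N}" for n
  proof (cases "n < -N")
    case False
    hence "{n. g n \<noteq> 0} \<subseteq> {-N..n}" using N that by fastforce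
    hence "h n = seq_sum g" unfolding h_def by (intro seq_sum_eq_sum[symmetric]) auto
    thus ?thesis using g(2) by simp
  qed (simp add: h_def)
  hence "{n. h n \<noteq> 0} \<subseteq> {-N..N}" by blast
  hence "fin_supp h" by (rule finite_subset) simp
  thus ?thesis using step by (intro exI[of _ h] conjI allI)
qed

section \<open>Centralizers in \<open>\<int> wr \<int>\<close>\<close>

type_synonym wr_elem = "(int \<Rightarrow> int) \<times> int"

abbreviation apow :: "int \<Rightarrow> wr_elem" where
  "apow k \<equiv> ((\<lambda>_. 0), k)"

abbreviation wr_commute :: "wr_elem \<Rightarrow> wr_elem \<Rightarrow> bool" where
  "wr_commute x y \<equiv> wr_mult x y = wr_mult y x"

lemma wr_mult_pair [simp]: "wr_mult (h1, k1) (h2, k2) = ((\<lambda>i. h1 i + h2 (i - k1)), k1 + k2)"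
  by (simp add: wr_mult_def)

lemma wr_carrier_iff [simp]: "(h, k) \<in> wr_carrier \<longleftrightarrow> fin_supp h"
  by (simp add: wr_carrier_def)

lemma apow_in_carrier: "apow k \<in> wr_carrier"
  by simp

lemma wr_a_eq: "wr_a = apow 1"
  by (simp add: wr_a_def)

lemma wr_b_eq: "wr_b = (unit_at 0, 0)"
  by (simp add: wr_b_def unit_at_def fun_eq_iff)

lemma wr_pow_a: "wr_pow wr_a n = apow (int n)"
  by (induction n) (simp_all add: wr_pow_def wr_one_def wr_a_def)

lemma b_times_apow: "wr_mult wr_b (apow i) = (unit_at 0, i)"
  by (simp add: wr_b_eq)

text \<open>The centralizer of \<open>a\<close> is the cyclic group \<open>\<langle>a\<rangle>\<close>: an element \<open>(h, k)\<close> commutes with \<open>a\<close>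
  iff \<open>h\<close> is invariant under translation, and a finitely supported invariant \<open>h\<close> is \<open>0\<close>.\<close>

lemma centralizer_a:
  assumes "g \<in> wr_carrier"
  shows "wr_commute g wr_a \<longleftrightarrow> (\<exists>k. g = apow k)"
proof -
  obtain h k where g: "g = (h, k)" by fastforce
  have "h = (\<lambda>_. 0)" if inv: "\<forall>n. h n = h (n - 1)"
  proof -
    have const: "h n = h 0" for n
    proof (induction n rule: int_induct[where k=0])
      case (step1 i) thus ?case using inv[rule_format, of "i + 1"] by simp
    next
      case (step2 i) thus ?case using inv[rule_format, of i] by simp
    qed simp
    have "fin_supp h" using assms g by simp
    moreover have "{n. h n \<noteq> 0} = UNIV" if "h 0 \<noteq> 0"
      using that const by (metis (mono_tags) UNIV_eq_I mem_Collect_eq)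
    ultimately have "h 0 = 0" using infinite_UNIV_int by force
    thus ?thesis using const by auto
  qed
  moreover have "wr_commute g wr_a \<longleftrightarrow> (\<forall>n. h n = h (n - 1))"
    by (simp add: g wr_a_eq fun_eq_iff)
  ultimately show ?thesis using g by auto
qed

lemma centralizer_b: "wr_commute g wr_b \<longleftrightarrow> snd g = 0"
proof -
  obtain h k where g: "g = (h, k)" by fastforce
  have "wr_commute g wr_b \<longleftrightarrow> (\<forall>n. unit_at 0 (n - k) = unit_at 0 n)"
    by (simp add: g wr_b_eq fun_eq_iff add.commute)
  also have "\<dots> \<longleftrightarrow> k = 0" by (auto simp: unit_at_def dest: spec[of _ k])
  finally show ?thesis using g by simp
qed

text \<open>If \<open>(h, k)\<close> commutes with \<open>b a\<^sup>i = (\<delta>\<^sub>0, i)\<close>, then comparing first moments of the two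
  sides of the commutation gives \<open>k = i \<cdot> \<Sigma>h\<close>.\<close>

lemma commute_b_apow_exponent:
  assumes "fin_supp h" "wr_commute (h, k) (unit_at 0, i)"
  shows "k = i * seq_sum h"
proof -
  have "(\<lambda>n. h n + unit_at 0 (n - k)) = (\<lambda>n. unit_at 0 n + h (n - i))"
    using assms(2) by simp
  hence "seq_moment (\<lambda>n. h n + unit_at 0 (n - k)) = seq_moment (\<lambda>n. unit_at 0 n + h (n - i))"
    by simp
  moreover have "seq_moment (\<lambda>n. h n + unit_at 0 (n - k)) = seq_moment h + k"
    using seq_moment_shift[OF fin_supp_unit_at] assms(1)
    by (simp add: seq_moment_add fin_supp_shift fin_supp_unit_at seq_sum_unit_at seq_moment_unit_at)
  moreover have "seq_moment (\<lambda>n. unit_at 0 n + h (n - i)) = seq_moment h + i * seq_sum h"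
    using seq_moment_shift[OF assms(1)] assms(1)
    by (simp add: seq_moment_add fin_supp_shift fin_supp_unit_at seq_moment_unit_at)
  ultimately show ?thesis by simp
qed

text \<open>Conversely every pair \<open>(j, i \<cdot> j)\<close> arises: spreading the block indicator of \<open>[0, j)\<close>
  over the multiples of \<open>i\<close> gives an element \<open>(h, i \<cdot> j)\<close> commuting with \<open>b a\<^sup>i\<close> and \<open>\<Sigma>h = j\<close>.\<close>

definition block :: "int \<Rightarrow> int \<Rightarrow> int" where
  "block m n = (if 0 \<le> n \<and> n < m then 1 else if m \<le> n \<and> n < 0 then -1 else 0)"

definition spread_block :: "int \<Rightarrow> int \<Rightarrow> int \<Rightarrow> int" where
  "spread_block i j n = (if i dvd n then block j (n div i) else 0)"

lemma block_step: "block m n + unit_at m n = unit_at 0 n + block m (n - 1)"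
  by (auto simp: block_def unit_at_def)

lemma fin_supp_spread_block:
  assumes "i \<noteq> 0"
  shows "fin_supp (spread_block i j)"
proof (rule finite_subset)
  show "{n. spread_block i j n \<noteq> 0} \<subseteq> (\<lambda>q. i * q) ` {min 0 j..max 0 j}"
    using assms by (auto simp: spread_block_def block_def elim!: dvdE split: if_splits)
qed simp

lemma spread_block_commutes:
  assumes "i \<noteq> 0"
  shows "wr_commute (spread_block i j, i * j) (unit_at 0, i)"
proof -
  have "spread_block i j n + unit_at 0 (n - i * j) = unit_at 0 n + spread_block i j (n - i)" for n
  proof (cases "i dvd n")
    case True
    then obtain q where q: "n = i * q" by blast
    have "n - i = i * (q - 1)" "n - i * j = i * (q - j)" using q by (simp_all add: algebra_simps)
    thus ?thesis using q assms block_step[of j q]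
      by (simp add: spread_block_def unit_at_def)
  next
    case False
    hence "\<not> i dvd n - i" "n \<noteq> i * j" "n \<noteq> 0" by (auto simp: dvd_diff_left_iff)
    thus ?thesis using False by (simp add: spread_block_def unit_at_def)
  qed
  thus ?thesis by (simp add: fun_eq_iff)
qed

lemma commuting_with_b_apow_exists:
  "\<exists>h. fin_supp h \<and> seq_sum h = j \<and> wr_commute (h, i * j) (unit_at 0, i)"
proof (cases "i = 0")
  case True
  have "fin_supp (\<lambda>n. j * unit_at 0 n)" using fin_supp_unit_at by (rule fin_supp_mult)
  moreover have "seq_sum (\<lambda>n. j * unit_at 0 n) = j"
    using seq_sum_mult[OF fin_supp_unit_at] by (simp add: seq_sum_unit_at)
  ultimately show ?thesis
    using True by (intro exI[of _ "\<lambda>n. j * unit_at 0 n"]) (simp add: add.commute)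
next
  case False
  have "i * j = i * seq_sum (spread_block i j)"
    using commute_b_apow_exponent fin_supp_spread_block spread_block_commutes False by blast
  thus ?thesis using False fin_supp_spread_block spread_block_commutes
    by (intro exI[of _ "spread_block i j"]) simp
qed

text \<open>The relation \<open>l = i \<cdot> j\<close> between \<open>a\<^sup>i, a\<^sup>j, a\<^sup>l\<close> is existentially definable.
  Witnesses are \<open>w\<close> with \<open>[w, b a\<^sup>i] = 1\<close>, so \<open>w = (h\<^sub>w, i \<cdot> \<Sigma>h\<^sub>w)\<close>; \<open>v\<close> with \<open>[v, b a] = 1\<close> and
  \<open>a\<^sup>j v \<in> H\<close>, so \<open>v = (h\<^sub>v, -j)\<close> with \<open>\<Sigma>h\<^sub>v = -j\<close>; and \<open>u \<in> H\<close> with \<open>u w v a\<^sup>j a = a u a\<^sup>l\<close>.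
  The last equation says \<open>l = i \<cdot> \<Sigma>h\<^sub>w\<close> and that \<open>h\<^sub>w + h\<^sub>v(\<cdot> - l)\<close> is a difference sequence
  \<open>u(\<cdot> - 1) - u\<close>, whose sum vanishes; hence \<open>\<Sigma>h\<^sub>w = j\<close>.\<close>

definition mult_witness :: "wr_elem \<Rightarrow> wr_elem \<Rightarrow> wr_elem \<Rightarrow> wr_elem \<Rightarrow> wr_elem \<Rightarrow> wr_elem \<Rightarrow> bool"
  where "mult_witness x y z w v u \<longleftrightarrow>
    wr_commute w (wr_mult wr_b x) \<and> wr_commute v (wr_mult wr_b wr_a) \<and>
    wr_commute (wr_mult y v) wr_b \<and> wr_commute u wr_b \<and>
    wr_mult (wr_mult (wr_mult (wr_mult u w) v) y) wr_a = wr_mult (wr_mult wr_a u) z"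

lemma mult_witness_sound:
  assumes "w \<in> wr_carrier" "v \<in> wr_carrier" "u \<in> wr_carrier"
    and "mult_witness (apow i) (apow j) (apow l) w v u"
  shows "l = i * j"
proof -
  obtain hw kw hv kv hu ku where wvu: "w = (hw, kw)" "v = (hv, kv)" "u = (hu, ku)"
    by (metis surj_pair)
  have fin: "fin_supp hw" "fin_supp hv" "fin_supp hu" using assms(1-3) wvu by auto
  have rel: "wr_commute (hw, kw) (unit_at 0, i)" "wr_commute (hv, kv) (unit_at 0, 1)"
      "j + kv = 0" "ku = 0"
      "wr_mult (wr_mult (wr_mult (wr_mult (hu, 0) (hw, kw)) (hv, kv)) (apow j)) (apow 1)
       = wr_mult (wr_mult (apow 1) (hu, 0)) (apow l)"
    using assms(4) wvu centralizer_b[of "wr_mult (apow j) v"] centralizer_b[of u]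
    unfolding mult_witness_def b_times_apow wr_a_eq
    by (simp_all add: b_times_apow[of 1, unfolded wr_a_eq])
  have kw: "kw = i * seq_sum hw" and kv: "kv = seq_sum hv"
    using commute_b_apow_exponent[OF fin(1) rel(1)] commute_b_apow_exponent[OF fin(2) rel(2)]
    by simp_all
  from rel(5) have diff: "(\<lambda>n. hu n + hw n + hv (n - kw)) = (\<lambda>n. hu (n - 1))"
    and exps: "kw + kv + j + 1 = 1 + l"
    by (simp_all add: fun_eq_iff)
  have "seq_sum (\<lambda>n. hu n + hw n + hv (n - kw)) = seq_sum (\<lambda>n. hu (n - 1))"
    using diff by simp
  hence "seq_sum hu + seq_sum hw + seq_sum hv = seq_sum hu"
    using fin by (simp add: seq_sum_add fin_supp_add fin_supp_shift seq_sum_shift)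
  hence "seq_sum hw = j" using kv rel(3) by linarith
  thus ?thesis using kw kv rel(3) exps by simp
qed

lemma mult_witness_complete:
  "\<exists>w\<in>wr_carrier. \<exists>v\<in>wr_carrier. \<exists>u\<in>wr_carrier.
     mult_witness (apow i) (apow j) (apow (i * j)) w v u"
proof -
  let ?l = "i * j"
  obtain hw where hw: "fin_supp hw" "seq_sum hw = j" "wr_commute (hw, ?l) (unit_at 0, i)"
    using commuting_with_b_apow_exists by blast
  obtain hv where hv: "fin_supp hv" "seq_sum hv = - j" "wr_commute (hv, - j) (unit_at 0, 1)"
    using commuting_with_b_apow_exists[of "- j" 1] by auto
  define g where "g = (\<lambda>n. - (hw n + hv (n - ?l)))"
  have "fin_supp (\<lambda>n. hw n + hv (n - ?l))"
    using hw(1) hv(1) by (simp add: fin_supp_add fin_supp_shift)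
  hence "fin_supp g" unfolding g_def neg_equal_0_iff_equal .
  moreover have "seq_sum g = 0"
    using seq_sum_mult[of "\<lambda>n. hw n + hv (n - ?l)" "-1"] hw(1,2) hv(1,2)
    by (simp add: g_def fin_supp_add fin_supp_shift seq_sum_add seq_sum_shift)
  ultimately obtain hu where hu: "fin_supp hu" "\<forall>n. hu n = hu (n - 1) + g n"
    using seq_sum_zero_telescopes by blast
  have "mult_witness (apow i) (apow j) (apow ?l) (hw, ?l) (hv, - j) (hu, 0)"
    unfolding mult_witness_def b_times_apow wr_a_eq b_times_apow[of 1, unfolded wr_a_eq]
    using hw(3) hv(3) hu(2) centralizer_b by (simp add: fun_eq_iff g_def algebra_simps)
  thus ?thesis using hw(1) hv(1) hu(1) by fastforce
qed

corollary mult_witness_iff: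
  "(\<exists>w\<in>wr_carrier. \<exists>v\<in>wr_carrier. \<exists>u\<in>wr_carrier. mult_witness (apow i) (apow j) (apow l) w v u)
   \<longleftrightarrow> l = i * j"
  using mult_witness_sound mult_witness_complete by blast

section \<open>Translating arithmetic into the group\<close>

text \<open>Convention: \<open>A, B\<close> hold \<open>a, b\<close>, the
  arguments of a formula builder are below its last parameter \<open>F\<close>, and its own bound variables
  are \<open>F, F+1, \<dots>\<close>; \<open>ab_params e A B F\<close> packages the assumptions on \<open>A, B\<close>.\<close>

abbreviation wr_sat :: "(nat \<Rightarrow> wr_elem) \<Rightarrow> gform \<Rightarrow> bool" where
  "wr_sat \<equiv> gsat wr_carrier wr_mult"

definition commF :: "gterm \<Rightarrow> gterm \<Rightarrow> gform" where
  "commF s t = GEq (GMul s t) (GMul t s)"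

lemma gsat_commF [simp]:
  "gsat C m e (commF s t) \<longleftrightarrow> m (gval m e s) (gval m e t) = m (gval m e t) (gval m e s)"
  by (simp add: commF_def)

definition ab_params :: "(nat \<Rightarrow> wr_elem) \<Rightarrow> nat \<Rightarrow> nat \<Rightarrow> nat \<Rightarrow> bool" where
  "ab_params e A B F \<longleftrightarrow> A < F \<and> B < F \<and> e A = wr_a \<and> e B = wr_b"

lemma ab_params_upd_other:
  "ab_params e A B F \<Longrightarrow> x \<noteq> A \<Longrightarrow> x \<noteq> B \<Longrightarrow> ab_params (e(x := w)) A B F"
  by (simp add: ab_params_def)

definition InA :: "nat \<Rightarrow> nat \<Rightarrow> gform" where
  "InA A x = commF (GVar x) (GVar A)"

lemma InA_sem:
  assumes "ab_params e A B F" "e x \<in> wr_carrier"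
  shows "wr_sat e (InA A x) \<longleftrightarrow> (\<exists>k. e x = apow k)"
  using assms centralizer_a[of "e x"] by (simp add: InA_def ab_params_def)

definition MulF :: "nat \<Rightarrow> nat \<Rightarrow> nat \<Rightarrow> nat \<Rightarrow> nat \<Rightarrow> nat \<Rightarrow> gform" where
  "MulF A B x y z F = GEx F (GEx (F+1) (GEx (F+2) (
     GAnd (commF (GVar F) (GMul (GVar B) (GVar x)))
    (GAnd (commF (GVar (F+1)) (GMul (GVar B) (GVar A)))
    (GAnd (commF (GMul (GVar y) (GVar (F+1))) (GVar B))
    (GAnd (commF (GVar (F+2)) (GVar B))
     (GEq (GMul (GMul (GMul (GMul (GVar (F+2)) (GVar F)) (GVar (F+1))) (GVar y)) (GVar A))
          (GMul (GMul (GVar A) (GVar (F+2))) (GVar z)))))))))"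

lemma MulF_sem:
  assumes "ab_params e A B F" "x < F" "y < F" "z < F"
    "e x = apow i" "e y = apow j" "e z = apow l"
  shows "wr_sat e (MulF A B x y z F) \<longleftrightarrow> l = i * j"
proof -
  have "wr_sat e (MulF A B x y z F) \<longleftrightarrow>
      (\<exists>w\<in>wr_carrier. \<exists>v\<in>wr_carrier. \<exists>u\<in>wr_carrier. mult_witness (e x) (e y) (e z) w v u)"
    using assms(1-4) by (simp add: MulF_def mult_witness_def ab_params_def)
  thus ?thesis using assms(5-7) mult_witness_iff by simp
qed

definition ProdF :: "nat \<Rightarrow> nat \<Rightarrow> nat \<Rightarrow> nat \<Rightarrow> nat \<Rightarrow> nat \<Rightarrow> gform" where
  "ProdF A B x y z F = GAnd (InA A z) (MulF A B x y z F)"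

lemma ProdF_sem:
  assumes "ab_params e A B F" "x < F" "y < F" "z < F"
    "e x = apow i" "e y = apow j" "e z \<in> wr_carrier"
  shows "wr_sat e (ProdF A B x y z F) \<longleftrightarrow> e z = apow (i * j)"
  using assms InA_sem[OF assms(1,7)] MulF_sem[OF assms(1-6)] by (auto simp: ProdF_def)

lemma ex_InA_sem:
  assumes "ab_params e A B F"
  shows "wr_sat e (GEx F (GAnd (InA A F) \<phi>)) \<longleftrightarrow> (\<exists>k. wr_sat (e(F := apow k)) \<phi>)"
proof -
  have "wr_sat (e(F := x)) (InA A F) \<longleftrightarrow> (\<exists>k. x = apow k)" if "x \<in> wr_carrier" for x
    using InA_sem[of "e(F := x)" A B F F] assms that by (simp add: ab_params_def)
  thus ?thesis by auto
qed

definition SqF :: "nat \<Rightarrow> nat \<Rightarrow> nat \<Rightarrow> nat \<Rightarrow> gform" where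
  "SqF A B x F = GEx F (GAnd (InA A F) (ProdF A B F F x (F+1)))"

lemma SqF_sem:
  assumes "ab_params e A B F" "x < F" "e x \<in> wr_carrier"
  shows "wr_sat e (SqF A B x F) \<longleftrightarrow> (\<exists>t. e x = apow (t * t))"
  unfolding SqF_def ex_InA_sem[OF assms(1)]
  using assms ProdF_sem[of "e(F := apow t)" A B "F+1" F F x t t for t] by (simp add: ab_params_def)

text \<open>\<open>PosF A B x F\<close>: \<open>x\<close> is a product of four squares in \<open>\<langle>a\<rangle>\<close>, i.e.\ (Lagrange) \<open>x = a\<^sup>n\<close>
  with \<open>n \<in> \<nat>\<close>.\<close>

definition PosF :: "nat \<Rightarrow> nat \<Rightarrow> nat \<Rightarrow> nat \<Rightarrow> gform" where
  "PosF A B x F = GEx F (GEx (F+1) (GEx (F+2) (GEx (F+3) (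
     GAnd (SqF A B F (F+4)) (GAnd (SqF A B (F+1) (F+4)) (GAnd (SqF A B (F+2) (F+4))
     (GAnd (SqF A B (F+3) (F+4))
       (GEq (GVar x) (GMul (GMul (GMul (GVar F) (GVar (F+1))) (GVar (F+2))) (GVar (F+3)))))))))))"

lemma PosF_sem:
  assumes "ab_params e A B F" "x < F"
  shows "wr_sat e (PosF A B x F) \<longleftrightarrow> (\<exists>n::nat. e x = apow (int n))"
proof -
  have "wr_sat e (PosF A B x F) \<longleftrightarrow> (\<exists>p\<in>wr_carrier. (\<exists>a. p = apow (a * a)) \<and>
      (\<exists>q\<in>wr_carrier. (\<exists>b. q = apow (b * b)) \<and> (\<exists>r\<in>wr_carrier. (\<exists>c. r = apow (c * c)) \<and>
      (\<exists>s\<in>wr_carrier. (\<exists>d. s = apow (d * d)) \<and> e x = wr_mult (wr_mult (wr_mult p q) r) s))))"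
    using assms by (simp add: PosF_def SqF_sem ab_params_def)
  also have "\<dots> \<longleftrightarrow> (\<exists>a b c d. e x = apow (a^2 + b^2 + c^2 + d^2))" (is "?L \<longleftrightarrow> ?R")
  proof
    assume ?L thus ?R by (auto simp: power2_eq_square) blast
  next
    assume ?R
    then obtain a b c d where "e x = apow (a^2 + b^2 + c^2 + d^2)" by blast
    hence "e x = wr_mult (wr_mult (wr_mult (apow (a*a)) (apow (b*b))) (apow (c*c))) (apow (d*d))"
      by (simp add: power2_eq_square)
    thus ?L by (blast intro: apow_in_carrier)
  qed
  also have "\<dots> \<longleftrightarrow> (\<exists>n::nat. e x = apow (int n))"
    using sum_four_squares_iff_nonneg unfolding sum_four_squares_def
    by (metis nonneg_int_cases of_nat_0_le_iff)
  finally show ?thesis .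
qed

text \<open>Pattern shared by the translations of sums, products and equations: two fresh variables
  \<open>F, F+1\<close>, each pinned down to a unique value by a subformula.\<close>

lemma two_values_sem:
  assumes "u1 \<in> wr_carrier" "u2 \<in> wr_carrier"
    and "\<And>w1 w2. w1 \<in> wr_carrier \<Longrightarrow>
      wr_sat (e(F := w1, F+1 := w2)) P \<longleftrightarrow> (e(F := w1, F+1 := w2)) F = u1"
    and "\<And>w1 w2. w2 \<in> wr_carrier \<Longrightarrow>
      wr_sat (e(F := w1, F+1 := w2)) Q \<longleftrightarrow> (e(F := w1, F+1 := w2)) (F+1) = u2"
  shows "wr_sat e (GEx F (GEx (F+1) (GAnd P (GAnd Q R)))) \<longleftrightarrow> wr_sat (e(F := u1, F+1 := u2)) R"
  using assms by auto

text \<open>Translation of an arithmetic term \<open>t\<close>: \<open>TmF \<rho> A B t y F\<close> says that group variable \<open>y\<close>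
  holds \<open>a\<^sup>t\<close>, where arithmetic variable \<open>v\<close> lives in group variable \<open>\<rho> v\<close>, \<open>A, B\<close> hold \<open>a, b\<close>, and
  auxiliary variables are numbered from \<open>F\<close> on.\<close>

fun TmF :: "(nat \<Rightarrow> nat) \<Rightarrow> nat \<Rightarrow> nat \<Rightarrow> aterm \<Rightarrow> nat \<Rightarrow> nat \<Rightarrow> gform" where
  "TmF \<rho> A B (AVar v) y F = GEq (GVar y) (GVar (\<rho> v))"
| "TmF \<rho> A B (APlus s t) y F = GEx F (GEx (F+1) (GAnd (TmF \<rho> A B s F (F+2))
     (GAnd (TmF \<rho> A B t (F+1) (F+2)) (GEq (GVar y) (GMul (GVar F) (GVar (F+1)))))))"
| "TmF \<rho> A B (ATimes s t) y F = GEx F (GEx (F+1) (GAnd (TmF \<rho> A B s F (F+2))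
     (GAnd (TmF \<rho> A B t (F+1) (F+2)) (ProdF A B F (F+1) y (F+2)))))"

definition encodes :: "(nat \<Rightarrow> wr_elem) \<Rightarrow> (nat \<Rightarrow> nat) \<Rightarrow> (nat \<Rightarrow> nat) \<Rightarrow> nat set \<Rightarrow> nat \<Rightarrow> bool"
  where "encodes e \<rho> \<nu> V F \<longleftrightarrow> (\<forall>v\<in>V. \<rho> v < F \<and> e (\<rho> v) = apow (int (\<nu> v)))"

lemma encodes_two_fresh:
  assumes "encodes e \<rho> \<nu> V F" "V' \<subseteq> V"
  shows "encodes (e(F := x, F+1 := y)) \<rho> \<nu> V' (F+2)"
  unfolding encodes_def
proof
  fix v assume "v \<in> V'"
  hence "\<rho> v < F \<and> e (\<rho> v) = apow (int (\<nu> v))" using assms unfolding encodes_def by blast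
  thus "\<rho> v < F + 2 \<and> (e(F := x, F+1 := y)) (\<rho> v) = apow (int (\<nu> v))" by simp
qed

lemma TmF_sem:
  assumes "encodes e \<rho> \<nu> (atvars t) F" "ab_params e A B F" "y < F" "e y \<in> wr_carrier"
  shows "wr_sat e (TmF \<rho> A B t y F) \<longleftrightarrow> e y = apow (int (aval \<nu> t))"
  using assms
proof (induction t arbitrary: e y F)
  case (AVar v)
  thus ?case by (simp add: encodes_def)
next
  case (APlus s t)
  have "wr_sat (e(F := w1, F+1 := w2)) (TmF \<rho> A B s F (F+2)) \<longleftrightarrow>
      (e(F := w1, F+1 := w2)) F = apow (int (aval \<nu> s))" if "w1 \<in> wr_carrier" for w1 w2
    by (rule APlus.IH(1)[OF encodes_two_fresh[OF APlus.prems(1)]])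
      (use APlus.prems that in \<open>auto simp: ab_params_def\<close>)
  moreover have "wr_sat (e(F := w1, F+1 := w2)) (TmF \<rho> A B t (F+1) (F+2)) \<longleftrightarrow>
      (e(F := w1, F+1 := w2)) (F+1) = apow (int (aval \<nu> t))" if "w2 \<in> wr_carrier" for w1 w2
    by (rule APlus.IH(2)[OF encodes_two_fresh[OF APlus.prems(1)]])
      (use APlus.prems that in \<open>auto simp: ab_params_def\<close>)
  ultimately show ?case using APlus.prems
    by (simp only: TmF.simps two_values_sem[OF apow_in_carrier apow_in_carrier]) simp
next
  case (ATimes s t)
  have "wr_sat (e(F := w1, F+1 := w2)) (TmF \<rho> A B s F (F+2)) \<longleftrightarrow>
      (e(F := w1, F+1 := w2)) F = apow (int (aval \<nu> s))" if "w1 \<in> wr_carrier" for w1 w2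
    by (rule ATimes.IH(1)[OF encodes_two_fresh[OF ATimes.prems(1)]])
      (use ATimes.prems that in \<open>auto simp: ab_params_def\<close>)
  moreover have "wr_sat (e(F := w1, F+1 := w2)) (TmF \<rho> A B t (F+1) (F+2)) \<longleftrightarrow>
      (e(F := w1, F+1 := w2)) (F+1) = apow (int (aval \<nu> t))" if "w2 \<in> wr_carrier" for w1 w2
    by (rule ATimes.IH(2)[OF encodes_two_fresh[OF ATimes.prems(1)]])
      (use ATimes.prems that in \<open>auto simp: ab_params_def\<close>)
  moreover have "wr_sat (e(F := apow (int (aval \<nu> s)), F+1 := apow (int (aval \<nu> t))))
      (ProdF A B F (F+1) y (F+2)) \<longleftrightarrow> e y = apow (int (aval \<nu> (ATimes s t)))"
    using ATimes.prems by (subst ProdF_sem) (auto simp: ab_params_def)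
  ultimately show ?case
    by (simp only: TmF.simps two_values_sem[OF apow_in_carrier apow_in_carrier])
qed

text \<open>A quantifier over \<open>\<nat>\<close> becomes a quantifier over the
  group relativised to \<open>{a\<^sup>n | n \<in> \<nat>}\<close>, which \<open>PosF\<close> defines.\<close>

fun FmF :: "(nat \<Rightarrow> nat) \<Rightarrow> nat \<Rightarrow> nat \<Rightarrow> aform \<Rightarrow> nat \<Rightarrow> gform" where
  "FmF \<rho> A B (AEq s t) F = GEx F (GEx (F+1) (GAnd (TmF \<rho> A B s F (F+2))
     (GAnd (TmF \<rho> A B t (F+1) (F+2)) (GEq (GVar F) (GVar (F+1))))))"
| "FmF \<rho> A B (ANot \<phi>) F = GNot (FmF \<rho> A B \<phi> F)"
| "FmF \<rho> A B (AAnd \<phi> \<psi>) F = GAnd (FmF \<rho> A B \<phi> F) (FmF \<rho> A B \<psi> F)"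
| "FmF \<rho> A B (AEx v \<phi>) F = GEx (\<rho> v) (GAnd (PosF A B (\<rho> v) F) (FmF \<rho> A B \<phi> F))"

fun avars :: "aform \<Rightarrow> nat set" where
  "avars (AEq s t) = atvars s \<union> atvars t"
| "avars (ANot \<phi>) = avars \<phi>"
| "avars (AAnd \<phi> \<psi>) = avars \<phi> \<union> avars \<psi>"
| "avars (AEx v \<phi>) = insert v (avars \<phi>)"

lemma encodes_bind:
  assumes "inj \<rho>" "\<rho> v < F" "encodes e \<rho> \<nu> (V - {v}) F"
  shows "encodes (e(\<rho> v := apow (int n))) \<rho> (\<nu>(v := n)) V F"
  using assms by (auto simp: encodes_def dest: injD)

lemma FmF_sem:
  assumes "inj \<rho>" "\<forall>v\<in>avars \<phi>. \<rho> v < F \<and> \<rho> v \<noteq> A \<and> \<rho> v \<noteq> B"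
    and "encodes e \<rho> \<nu> (afv \<phi>) F" "ab_params e A B F"
  shows "wr_sat e (FmF \<rho> A B \<phi> F) \<longleftrightarrow> asat \<nu> \<phi>"
  using assms(2-)
proof (induction \<phi> arbitrary: e \<nu>)
  case (AEq s t)
  have "wr_sat (e(F := w1, F+1 := w2)) (TmF \<rho> A B s F (F+2)) \<longleftrightarrow>
      (e(F := w1, F+1 := w2)) F = apow (int (aval \<nu> s))" if "w1 \<in> wr_carrier" for w1 w2
    by (rule TmF_sem[OF encodes_two_fresh[OF AEq.prems(2)]])
      (use AEq.prems that in \<open>auto simp: ab_params_def\<close>)
  moreover have "wr_sat (e(F := w1, F+1 := w2)) (TmF \<rho> A B t (F+1) (F+2)) \<longleftrightarrow>
      (e(F := w1, F+1 := w2)) (F+1) = apow (int (aval \<nu> t))" if "w2 \<in> wr_carrier" for w1 w2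
    by (rule TmF_sem[OF encodes_two_fresh[OF AEq.prems(2)]])
      (use AEq.prems that in \<open>auto simp: ab_params_def\<close>)
  ultimately show ?case
    by (simp only: FmF.simps two_values_sem[OF apow_in_carrier apow_in_carrier]) simp
next
  case (ANot \<phi>)
  thus ?case by simp
next
  case (AAnd \<phi> \<psi>)
  have "wr_sat e (FmF \<rho> A B \<phi> F) \<longleftrightarrow> asat \<nu> \<phi>"
    by (rule AAnd.IH(1)) (use AAnd.prems in \<open>auto simp: encodes_def\<close>)
  moreover have "wr_sat e (FmF \<rho> A B \<psi> F) \<longleftrightarrow> asat \<nu> \<psi>"
    by (rule AAnd.IH(2)) (use AAnd.prems in \<open>auto simp: encodes_def\<close>)
  ultimately show ?case by simp
next
  case (AEx v \<phi>)
  have v: "\<rho> v < F" "\<rho> v \<noteq> A" "\<rho> v \<noteq> B" using AEx.prems(1) by auto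
  have "wr_sat (e(\<rho> v := x)) (PosF A B (\<rho> v) F) \<longleftrightarrow> (\<exists>n::nat. x = apow (int n))" for x
    using PosF_sem[OF ab_params_upd_other[OF AEx.prems(3) v(2,3)]] v by simp
  moreover have "wr_sat (e(\<rho> v := apow (int n))) (FmF \<rho> A B \<phi> F) \<longleftrightarrow> asat (\<nu>(v := n)) \<phi>" for n
    using AEx.IH encodes_bind[OF assms(1) v(1)] ab_params_upd_other[OF AEx.prems(3) v(2,3)]
      AEx.prems by simp
  ultimately show ?case by auto
qed

section \<open>Definability of the preimages\<close>

fun AllPosF :: "nat \<Rightarrow> nat \<Rightarrow> nat \<Rightarrow> nat \<Rightarrow> gform" where
  "AllPosF A B F 0 = GEq (GVar A) (GVar A)"
| "AllPosF A B F (Suc k) = GAnd (PosF A B k F) (AllPosF A B F k)"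

lemma AllPosF_sem:
  assumes "ab_params e A B F" "k \<le> F"
  shows "wr_sat e (AllPosF A B F k) \<longleftrightarrow> (\<forall>i<k. \<exists>n::nat. e i = apow (int n))"
  using assms(2) by (induction k) (auto simp: PosF_sem[OF assms(1)] less_Suc_eq)

lemma gfv_MulF: "gfv (MulF A B x y z F) \<subseteq> {x, y, z, A, B}"
  by (auto simp: MulF_def commF_def)

lemma gfv_ProdF: "gfv (ProdF A B x y z F) \<subseteq> {x, y, z, A, B}"
  using gfv_MulF[of A B x y z F] by (auto simp: ProdF_def InA_def commF_def)

lemma gfv_SqF: "gfv (SqF A B x F) \<subseteq> {x, A, B}"
  using gfv_ProdF[of A B F F x "F+1"] by (auto simp: SqF_def InA_def commF_def)

lemma gfv_PosF: "gfv (PosF A B x F) \<subseteq> {x, A, B}"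
  using gfv_SqF[of A B F "F+4"] gfv_SqF[of A B "F+1" "F+4"] gfv_SqF[of A B "F+2" "F+4"]
    gfv_SqF[of A B "F+3" "F+4"]
  by (auto simp: PosF_def)

lemma gfv_AllPosF: "gfv (AllPosF A B F k) \<subseteq> {..<k} \<union> {A, B}"
  by (induction k) (use gfv_PosF in fastforce)+

lemma gfv_TmF: "gfv (TmF \<rho> A B t y F) \<subseteq> {y, A, B} \<union> \<rho> ` atvars t"
proof (induction t arbitrary: y F)
  case (APlus s t)
  thus ?case using APlus.IH[of F "F+2"] APlus.IH[of "F+1" "F+2"] by fastforce
next
  case (ATimes s t)
  thus ?case using ATimes.IH[of F "F+2"] ATimes.IH[of "F+1" "F+2"] gfv_ProdF[of A B F "F+1" y "F+2"]
    by fastforce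
qed simp

lemma gfv_FmF:
  assumes "inj \<rho>"
  shows "gfv (FmF \<rho> A B \<phi> F) \<subseteq> {A, B} \<union> \<rho> ` afv \<phi>"
proof (induction \<phi>)
  case (AEq s t)
  thus ?case using gfv_TmF[of \<rho> A B s F "F+2"] gfv_TmF[of \<rho> A B t "F+1" "F+2"] by fastforce
next
  case (AEx v \<phi>)
  have "gfv (FmF \<rho> A B (AEx v \<phi>) F) = (gfv (PosF A B (\<rho> v) F) \<union> gfv (FmF \<rho> A B \<phi> F)) - {\<rho> v}"
    by simp
  also have "\<dots> \<subseteq> ({\<rho> v, A, B} \<union> ({A, B} \<union> \<rho> ` afv \<phi>)) - {\<rho> v}"
    using gfv_PosF[of A B "\<rho> v" F] AEx.IH by blast
  also have "\<dots> \<subseteq> {A, B} \<union> \<rho> ` afv (AEx v \<phi>)" using assms by (auto dest: injD)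
  finally show ?case .
qed auto

lemma finite_avars: "finite (avars \<phi>)"
proof -
  have "finite (atvars t)" for t by (induction t) auto
  thus ?thesis by (induction \<phi>) auto
qed

text \<open>The translation of a formula \<open>\<phi>\<close> with free variables below \<open>k\<close>: arithmetic variable \<open>v\<close>
  keeps its index if \<open>v < k\<close> and is moved above \<open>k + 1\<close> otherwise; \<open>k, k+1\<close> hold \<open>a, b\<close>; and
  auxiliary variables start above all of these.\<close>

definition var_layout :: "nat \<Rightarrow> nat \<Rightarrow> nat" where
  "var_layout k v = (if v < k then v else v + k + 2)"

definition first_aux :: "nat \<Rightarrow> aform \<Rightarrow> nat" where
  "first_aux k \<phi> = k + 3 + Max (avars \<phi> \<union> {0})"

definition translation :: "nat \<Rightarrow> aform \<Rightarrow> gform" where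
  "translation k \<phi> = GAnd (AllPosF k (k+1) (first_aux k \<phi>) k)
     (FmF (var_layout k) k (k+1) \<phi> (first_aux k \<phi>))"

lemma inj_var_layout: "inj (var_layout k)"
  unfolding var_layout_def by (rule injI) (auto split: if_splits)

lemma var_layout_bounds:
  "\<forall>v\<in>avars \<phi>. var_layout k v < first_aux k \<phi> \<and> var_layout k v \<noteq> k \<and> var_layout k v \<noteq> k + 1"
proof
  fix v assume "v \<in> avars \<phi>"
  hence "v \<le> Max (avars \<phi> \<union> {0})" using finite_avars by (intro Max_ge) auto
  thus "var_layout k v < first_aux k \<phi> \<and> var_layout k v \<noteq> k \<and> var_layout k v \<noteq> k + 1"
    unfolding var_layout_def first_aux_def by auto
qed

lemma gfv_translation:
  assumes "afv \<phi> \<subseteq> {..<k}"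
  shows "gfv (translation k \<phi>) \<subseteq> {..<k + 2}"
proof -
  have "gfv (translation k \<phi>) =
      gfv (AllPosF k (k+1) (first_aux k \<phi>) k) \<union> gfv (FmF (var_layout k) k (k+1) \<phi> (first_aux k \<phi>))"
    by (simp add: translation_def)
  also have "\<dots> \<subseteq> ({..<k} \<union> {k, k+1}) \<union> ({k, k+1} \<union> var_layout k ` afv \<phi>)"
    using gfv_AllPosF gfv_FmF[OF inj_var_layout] by (rule Un_mono)
  also have "\<dots> \<subseteq> {..<k + 2}" using assms by (auto simp: var_layout_def)
  finally show ?thesis .
qed

lemma nat_powers_list:
  "(\<forall>i<length xs. \<exists>n::nat. xs ! i = apow (int n)) \<longleftrightarrow> (\<exists>ns. xs = map (\<lambda>n. apow (int n)) ns)"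
proof
  assume "\<forall>i<length xs. \<exists>n::nat. xs ! i = apow (int n)"
  hence "xs = map (\<lambda>n. apow (int n)) (map (\<lambda>x. nat (snd x)) xs)" by (intro nth_equalityI) auto
  thus "\<exists>ns. xs = map (\<lambda>n. apow (int n)) ns" by blast
qed auto

lemma translation_sem:
  assumes "afv \<phi> \<subseteq> {..<k}" "length xs = k"
  shows "wr_sat (\<lambda>i. (xs @ [wr_a, wr_b]) ! i) (translation k \<phi>) \<longleftrightarrow>
    (\<exists>ns. xs = map (\<lambda>n. apow (int n)) ns \<and> asat (\<lambda>i. ns ! i) \<phi>)"
proof -
  let ?e = "\<lambda>i. (xs @ [wr_a, wr_b]) ! i" and ?F = "first_aux k \<phi>"
  have ab: "ab_params ?e k (k+1) ?F"
    using assms(2) by (simp add: ab_params_def nth_append first_aux_def)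
  have xs_i: "?e i = xs ! i" if "i < k" for i using that assms(2) by (simp add: nth_append)
  have "wr_sat ?e (AllPosF k (k+1) ?F k) \<longleftrightarrow> (\<exists>ns. xs = map (\<lambda>n. apow (int n)) ns)"
    using AllPosF_sem[OF ab] xs_i nat_powers_list[of xs] assms(2) by (simp add: first_aux_def)
  moreover have "wr_sat ?e (FmF (var_layout k) k (k+1) \<phi> ?F) \<longleftrightarrow> asat (\<lambda>i. ns ! i) \<phi>"
    if "xs = map (\<lambda>n. apow (int n)) ns" for ns
  proof (rule FmF_sem[OF inj_var_layout var_layout_bounds _ ab])
    show "encodes ?e (var_layout k) (\<lambda>i. ns ! i) (afv \<phi>) ?F"
      using assms that by (auto simp: encodes_def var_layout_def first_aux_def nth_append)
  qed
  ultimately show ?thesis unfolding translation_def by auto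
qed

lemma definable_image:
  assumes "arith_definable k S"
  shows "group_definable_params wr_carrier wr_mult k (map (\<lambda>n. apow (int n)) ` S)"
proof -
  obtain \<phi> where \<phi>: "afv \<phi> \<subseteq> {..<k}" "S = {ns. length ns = k \<and> asat (\<lambda>i. ns ! i) \<phi>}"
    using assms unfolding arith_definable_def by blast
  let ?\<psi> = "translation k \<phi>"
  note transl = gfv_translation[OF \<phi>(1)] translation_sem[OF \<phi>(1)]
  have "map (\<lambda>n. apow (int n)) ` S =
      {xs. length xs = k \<and> set xs \<subseteq> wr_carrier \<and> wr_sat (\<lambda>i. (xs @ [wr_a, wr_b]) ! i) ?\<psi>}"
    (is "_ = ?D")
  proof (intro set_eqI iffI)
    fix xs assume "xs \<in> map (\<lambda>n. apow (int n)) ` S"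
    then obtain ns where "ns \<in> S" "xs = map (\<lambda>n. apow (int n)) ns" by blast
    thus "xs \<in> ?D" using transl(2) by (auto simp: \<phi>(2))
  next
    fix xs assume xs: "xs \<in> ?D"
    then obtain ns where "xs = map (\<lambda>n. apow (int n)) ns" "asat (\<lambda>i. ns ! i) \<phi>"
      using transl(2) by auto
    moreover have "length ns = k" using xs calculation(1) by simp
    ultimately show "xs \<in> map (\<lambda>n. apow (int n)) ` S" by (auto simp: \<phi>(2))
  qed
  moreover have "set [wr_a, wr_b] \<subseteq> wr_carrier"
    by (simp add: wr_a_eq wr_b_eq fin_supp_unit_at)
  ultimately show ?thesis
    unfolding group_definable_params_def using transl(1)
    by (intro exI[of _ ?\<psi>] exI[of _ "[wr_a, wr_b]"]) simp
qed

lemma singleton_code_preimage: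
  assumes "inj g" "\<forall>ns\<in>S. length ns = k"
  shows "{concat ds | ds. length ds = k \<and> set ds \<subseteq> {[g n] | n. True} \<and>
      map (\<lambda>xs. THE n. xs = [g n]) ds \<in> S} = map g ` S" (is "?P = _")
proof
  have decode: "(THE n. g m = g n) = m" for m
    using assms(1) by (auto dest: injD)
  show "?P \<subseteq> map g ` S"
  proof
    fix xs assume "xs \<in> ?P"
    then obtain ds where ds: "xs = concat ds" "set ds \<subseteq> {[g n] | n. True}"
      "map (\<lambda>xs. THE n. xs = [g n]) ds \<in> S" by blast
    define ns where "ns = map (\<lambda>xs. THE n. xs = [g n]) ds"
    have "ds = map (\<lambda>n. [g n]) ns"
      unfolding ns_def using ds(2) by (induction ds) (auto simp: decode)
    hence "xs = map g ns" using ds(1) by (simp add: concat_map_singleton)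
    thus "xs \<in> map g ` S" using ds(3) unfolding ns_def by blast
  qed
  show "map g ` S \<subseteq> ?P"
  proof
    fix xs assume "xs \<in> map g ` S"
    then obtain ns where ns: "ns \<in> S" "xs = map g ns" by blast
    let ?ds = "map (\<lambda>n. [g n]) ns"
    have "map (\<lambda>xs. THE n. xs = [g n]) ?ds = ns" by (induction ns) (simp_all add: decode)
    moreover have "xs = concat ?ds" "length ?ds = k" "set ?ds \<subseteq> {[g n] | n. True}"
      using ns assms(2) by auto
    ultimately show "xs \<in> ?P" using ns(1) by (metis (mono_tags, lifting) mem_Collect_eq)
  qed
qed

theorem lemma5p1:
  shows "interpretation_params_nat wr_carrier wr_mult 1
           {[wr_pow wr_a n] | n. True}
           (\<lambda>xs. THE n. xs = [wr_pow wr_a n])"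
  unfolding interpretation_params_nat_def
proof (intro conjI allI impI)
  let ?g = "wr_pow wr_a"
  have g: "?g = (\<lambda>n. apow (int n))" by (simp add: fun_eq_iff wr_pow_a)
  have inj: "inj ?g" unfolding g by (rule injI) simp
  show "{[?g n] | n. True} \<subseteq> {xs. length xs = 1 \<and> set xs \<subseteq> wr_carrier}" by (auto simp: g)
  have "m = (THE n. [?g m] = [?g n])" for m using inj by (simp add: inj_eq)
  hence "m \<in> (\<lambda>xs. THE n. xs = [?g n]) ` {[?g n] | n. True}" for m by blast
  thus "(\<lambda>xs. THE n. xs = [?g n]) ` {[?g n] | n. True} = UNIV" by blast
  fix k S assume S: "arith_definable k S"
  hence "\<forall>ns\<in>S. length ns = k" unfolding arith_definable_def by auto
  thus "group_definable_params wr_carrier wr_mult (1 * k)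
      {concat ds | ds. length ds = k \<and> set ds \<subseteq> {[?g n] | n. True} \<and>
        map (\<lambda>xs. THE n. xs = [?g n]) ds \<in> S}"
    using singleton_code_preimage[OF inj] definable_image[OF S] by (simp add: g)
qed

end
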